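(* Let $Q$ be a real affine space modelled on a real vector space $V$. For all $f,f'\in A(Q)$, all $n\in\mathbb N$, $q\in Q$ and $v_1,\dots,v_n\in V$, $$\delta^n(ff')(q;v_1,\dots,v_n)=\sum_{\substack{(I,I')\\ I\cup I'=N}}\delta^{|I|}f(q;\mathbf v^{I})\,\delta^{|I'|}f'(q;\mathbf v^{I'}),$$ where the sum runs over all ordered pairs $(I,I')$ of (possibly empty, possibly overlapping) subsets of $N=\{1,\dots,n\}$ with $I\cup I'=N$.
   Context: $A(Q)$ is the space of real functions on $Q$; $ff'$ is the pointwise product. For $I=\{i_1<\dots<i_m\}\subset N$, $\mathbf v^I=(v_{i_1},\dots,v_{i_m})$. The $m$-th polarization of $f\in A(Q)$ is $\delta^0f=f$ (so $\delta^0 f(q;\mathbf v^\emptyset)=f(q)$) and for $m\ge1$ $$\delta^m f(q;w_1,\dots,w_m)=(-1)^m\sum_{J\subset\{1,\dots,m\}}(-1)^{|J|}f\Big(q+\sum_{j\in J}w_j\Big),$$ the term for $J=\emptyset$ being $f(q)$. *)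

theory Defs
  imports Complex_Main
begin

text \<open>A real affine space Q modelled on V is rendered as a type 'q together with a
  translation action act :: 'q => 'v => 'q (q + v) of the real vector space 'v
  that is an action (act q 0 = q, act (act q u) w = act q (u + w)) and is free and
  transitive. Tuples (w_1,...,w_m) are functions nat => 'v read on indices 1..m.\<close>

definition is_affine_space :: "('q \<Rightarrow> 'v::real_vector \<Rightarrow> 'q) \<Rightarrow> bool" where
  "is_affine_space act \<longleftrightarrow>
     (\<forall>q. act q 0 = q) \<and>
     (\<forall>q u w. act (act q u) w = act q (u + w)) \<and>
     (\<forall>p q. \<exists>!u. act p u = q)"

definition polarization ::
  "('q \<Rightarrow> 'v::real_vector \<Rightarrow> 'q) \<Rightarrow> ('q \<Rightarrow> real) \<Rightarrow> nat \<Rightarrow> 'q \<Rightarrow> (nat \<Rightarrow> 'v) \<Rightarrow> real" where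
  "polarization act f m q w =
     (-1) ^ m * (\<Sum>J\<in>Pow {1..m}. (-1) ^ card J * f (act q (\<Sum>j\<in>J. w j)))"

definition subtuple :: "(nat \<Rightarrow> 'v) \<Rightarrow> nat set \<Rightarrow> nat \<Rightarrow> 'v" where
  "subtuple v I = (\<lambda>k. v (sorted_list_of_set I ! (k - 1)))"

end

theory Submission
  imports Defs
begin

(* Put g J = f (q + \<Sum>j\<in>J. v j) and \<Delta>\<^sub>N g = \<Sum>J\<subseteq>N. (-1)^|N - J| g J. Then \<delta>^n f (q; v) is
   \<Delta>\<^sub>{1..n} g, and since \<Delta> is invariant under relabelling the index set, \<delta>^|I| f (q; v^I) is
   \<Delta>\<^sub>I g. The theorem is therefore a Leibniz rule for \<Delta>. Adjoining an index x to N acts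
   as E - 1, where E g J = g (J \<union> {x}), and
     E(a b) - a b = (E a - a) b + a (E b - b) + (E a - a)(E b - b);
   the three terms correspond to x lying in I only, in I' only, or in both. *)

definition iterated_diff :: "'a set \<Rightarrow> ('a set \<Rightarrow> 'b::ring_1) \<Rightarrow> 'b" where
  "iterated_diff N g = (\<Sum>J\<in>Pow N. (-1) ^ card (N - J) * g J)"

definition covering_pairs :: "'a set \<Rightarrow> ('a set \<times> 'a set) set" where
  "covering_pairs N = {(I, I'). I \<subseteq> N \<and> I' \<subseteq> N \<and> I \<union> I' = N}"

lemma iterated_diff_empty [simp]: "iterated_diff {} g = g {}"
  by (simp add: iterated_diff_def)

lemma iterated_diff_insert:
  assumes "finite N" "x \<notin> N"
  shows "iterated_diff (insert x N) g = iterated_diff N (\<lambda>J. g (insert x J)) - iterated_diff N g"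
proof -
  have inj: "inj_on (insert x) (Pow N)"
    using assms(2) by (intro inj_onI) (metis PowD insert_ident subsetD)
  have disj: "Pow N \<inter> insert x ` Pow N = {}"
    using assms(2) by auto
  have diff_insert: "insert x N - J = insert x (N - J)" if "J \<in> Pow N" for J
    using that assms(2) by auto
  have "iterated_diff (insert x N) g
      = (\<Sum>J\<in>Pow N. (-1) ^ card (insert x N - J) * g J)
        + (\<Sum>J\<in>insert x ` Pow N. (-1) ^ card (insert x N - J) * g J)"
    unfolding iterated_diff_def Pow_insert
    using assms(1) disj by (simp add: sum.union_disjoint del: sum.reindex)
  also have "(\<Sum>J\<in>Pow N. (-1) ^ card (insert x N - J) * g J) = - iterated_diff N g"
    using assms by (simp add: iterated_diff_def diff_insert sum_negf[symmetric] finite_subset)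
  also have "(\<Sum>J\<in>insert x ` Pow N. (-1) ^ card (insert x N - J) * g J)
      = iterated_diff N (\<lambda>J. g (insert x J))"
    using assms(2) by (simp add: sum.reindex[OF inj] iterated_diff_def)
  finally show ?thesis
    by simp
qed

lemma iterated_diff_reindex:
  assumes "bij_betw e A N"
  shows "iterated_diff N g = iterated_diff A (\<lambda>J. g (e ` J))"
proof -
  have card_diff: "card (N - e ` J) = card (A - J)" if "J \<subseteq> A" for J
  proof -
    have inj: "inj_on e A"
      using assms(1) by (rule bij_betw_imp_inj_on)
    have "N - e ` J = e ` (A - J)"
      using inj that assms(1) by (simp add: inj_on_image_set_diff bij_betw_imp_surj_on)
    then show ?thesis
      using inj by (simp add: card_image inj_on_subset[OF inj Diff_subset])
  qed
  show ?thesis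
    unfolding iterated_diff_def
    by (simp add: sum.reindex_bij_betw[OF bij_betw_Pow[OF assms(1)], symmetric] card_diff)
qed

lemma covering_pairs_empty [simp]: "covering_pairs {} = {({}, {})}"
  by (auto simp: covering_pairs_def)

lemma finite_covering_pairs: "finite N \<Longrightarrow> finite (covering_pairs N)"
  by (rule finite_subset[of _ "Pow N \<times> Pow N"]) (auto simp: covering_pairs_def)

lemma sum_covering_pairs_insert:
  assumes "finite N" "x \<notin> N"
  shows "(\<Sum>p\<in>covering_pairs (insert x N). F p) =
    (\<Sum>(I, I')\<in>covering_pairs N.
       F (insert x I, I') + F (I, insert x I') + F (insert x I, insert x I'))"
proof -
  let ?C = "covering_pairs N"
  define left :: "'a set \<times> 'a set \<Rightarrow> 'a set \<times> 'a set"
    where "left = (\<lambda>(I, I'). (insert x I, I'))"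
  define right :: "'a set \<times> 'a set \<Rightarrow> 'a set \<times> 'a set"
    where "right = (\<lambda>(I, I'). (I, insert x I'))"
  define both :: "'a set \<times> 'a set \<Rightarrow> 'a set \<times> 'a set"
    where "both = (\<lambda>(I, I'). (insert x I, insert x I'))"
  have avoid_x: "x \<notin> I" "x \<notin> I'" if "(I, I') \<in> ?C" for I I'
    using that assms(2) by (auto simp: covering_pairs_def)
  have inj: "inj_on h ?C" if "h \<in> {left, right, both}" for h
    using that by (intro inj_on_inverseI[where g = "\<lambda>(I, I'). (I - {x}, I' - {x})"])
      (auto simp: left_def right_def both_def dest: avoid_x)
  have split: "covering_pairs (insert x N) = left ` ?C \<union> right ` ?C \<union> both ` ?C"
  proof (intro equalityI subsetI)
    fix p assume p: "p \<in> covering_pairs (insert x N)"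
    obtain I I' where p_eq: "p = (I, I')"
      by fastforce
    have C: "(I - {x}, I' - {x}) \<in> ?C"
      using p p_eq assms(2) by (auto simp: covering_pairs_def)
    have "x \<in> I \<union> I'"
      using p p_eq by (auto simp: covering_pairs_def)
    then consider "x \<in> I" "x \<notin> I'" | "x \<notin> I" "x \<in> I'" | "x \<in> I" "x \<in> I'"
      by blast
    then have "p \<in> {left (I - {x}, I' - {x}), right (I - {x}, I' - {x}), both (I - {x}, I' - {x})}"
      by cases (auto simp: p_eq left_def right_def both_def)
    with C show "p \<in> left ` ?C \<union> right ` ?C \<union> both ` ?C"
      by blast
  qed (auto simp: covering_pairs_def left_def right_def both_def)
  have "left ` ?C \<inter> right ` ?C = {}" "(left ` ?C \<union> right ` ?C) \<inter> both ` ?C = {}"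
    by (auto simp: left_def right_def both_def dest: avoid_x)
  then have "(\<Sum>p\<in>covering_pairs (insert x N). F p) =
      (\<Sum>p\<in>left ` ?C. F p) + (\<Sum>p\<in>right ` ?C. F p) + (\<Sum>p\<in>both ` ?C. F p)"
    unfolding split using finite_covering_pairs[OF assms(1)]
    by (simp add: sum.union_disjoint del: sum.reindex)
  also have "\<dots> = (\<Sum>p\<in>?C. F (left p)) + (\<Sum>p\<in>?C. F (right p)) + (\<Sum>p\<in>?C. F (both p))"
    using inj by (simp add: sum.reindex)
  finally show ?thesis
    by (simp add: sum.distrib case_prod_beta left_def right_def both_def)
qed

theorem iterated_diff_mult:
  fixes a b :: "'a set \<Rightarrow> 'b::ring_1"
  assumes "finite N"
  shows "iterated_diff N (\<lambda>J. a J * b J) =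
    (\<Sum>(I, I')\<in>covering_pairs N. iterated_diff I a * iterated_diff I' b)"
  using assms
proof (induction N arbitrary: a b rule: finite_induct)
  case empty
  show ?case
    by simp
next
  case (insert x N)
  let ?a = "\<lambda>J. a (insert x J)" and ?b = "\<lambda>J. b (insert x J)"
  have "(\<Sum>(I, I')\<in>covering_pairs (insert x N). iterated_diff I a * iterated_diff I' b)
      = (\<Sum>(I, I')\<in>covering_pairs N.
           iterated_diff I ?a * iterated_diff I' ?b - iterated_diff I a * iterated_diff I' b)"
    unfolding sum_covering_pairs_insert[OF insert.hyps]
  proof (intro sum.cong refl, clarify)
    fix I I' assume "(I, I') \<in> covering_pairs N"
    then have "finite I" "finite I'" "x \<notin> I" "x \<notin> I'"
      using insert.hyps by (auto simp: covering_pairs_def intro: finite_subset)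
    then show "iterated_diff (insert x I) a * iterated_diff I' b
        + iterated_diff I a * iterated_diff (insert x I') b
        + iterated_diff (insert x I) a * iterated_diff (insert x I') b
        = iterated_diff I ?a * iterated_diff I' ?b - iterated_diff I a * iterated_diff I' b"
      by (simp add: iterated_diff_insert algebra_simps)
  qed
  also have "\<dots> = iterated_diff N (\<lambda>J. ?a J * ?b J) - iterated_diff N (\<lambda>J. a J * b J)"
    by (simp add: sum_subtractf case_prod_beta insert.IH)
  also have "\<dots> = iterated_diff (insert x N) (\<lambda>J. a J * b J)"
    using insert.hyps by (simp add: iterated_diff_insert)
  finally show ?case
    by simp
qed

lemma polarization_eq_iterated_diff:
  "polarization act f m q w = iterated_diff {1..m} (\<lambda>J. f (act q (\<Sum>j\<in>J. w j)))"
  unfolding polarization_def iterated_diff_def sum_distrib_left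
proof (intro sum.cong refl)
  fix J assume J: "J \<in> Pow {1..m}"
  define c where "c = card ({1..m} - J)"
  have "card J \<le> m" "finite J"
    using J card_mono[of "{1..m}" J] by (auto intro: finite_subset)
  with J have "m = card J + c"
    by (simp add: c_def card_Diff_subset)
  then have "(-1::real) ^ m * (-1) ^ card J = (-1) ^ c"
    by (simp add: power_add)
  then show "(-1) ^ m * ((-1) ^ card J * f (act q (sum w J))) =
      (-1) ^ card ({1..m} - J) * f (act q (sum w J))"
    by (simp add: c_def mult.assoc[symmetric])
qed

lemma bij_betw_sorted_list_of_set_nth:
  assumes "finite I"
  shows "bij_betw (\<lambda>k. sorted_list_of_set I ! (k - 1)) {1..card I} I"
proof -
  have "bij_betw (\<lambda>k. k - 1) {1..card I} {..<card I}"
    by (rule bij_betw_byWitness[where f' = Suc]) auto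
  moreover have "bij_betw ((!) (sorted_list_of_set I)) {..<card I} I"
    using assms by (intro bij_betw_nth) auto
  ultimately show ?thesis
    using bij_betw_trans by (fastforce simp: comp_def)
qed

lemma polarization_subtuple:
  assumes "finite I"
  shows "polarization act f (card I) q (subtuple v I) =
    iterated_diff I (\<lambda>J. f (act q (\<Sum>j\<in>J. v j)))"
proof -
  let ?e = "\<lambda>k. sorted_list_of_set I ! (k - 1)"
  have e: "bij_betw ?e {1..card I} I"
    using assms by (rule bij_betw_sorted_list_of_set_nth)
  have "(\<Sum>j\<in>J. subtuple v I j) = (\<Sum>j\<in>?e ` J. v j)" if "J \<in> Pow {1..card I}" for J
    using that inj_on_subset[OF bij_betw_imp_inj_on[OF e]]
    by (simp add: sum.reindex subtuple_def)
  then show ?thesis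
    unfolding polarization_eq_iterated_diff iterated_diff_reindex[OF e]
    by (simp add: iterated_diff_def)
qed

theorem proposition3:
  fixes act :: "'q \<Rightarrow> 'v::real_vector \<Rightarrow> 'q"
    and f f' :: "'q \<Rightarrow> real" and n :: nat and q :: 'q and v :: "nat \<Rightarrow> 'v"
  assumes "is_affine_space act"
  shows "polarization act (\<lambda>x. f x * f' x) n q v =
    (\<Sum>(I, I') \<in> {(I, I'). I \<subseteq> {1..n} \<and> I' \<subseteq> {1..n} \<and> I \<union> I' = {1..n}}.
        polarization act f (card I) q (subtuple v I) *
        polarization act f' (card I') q (subtuple v I'))"
proof -
  let ?g = "\<lambda>h J. h (act q (\<Sum>j\<in>J. v j))"
  have "polarization act (\<lambda>x. f x * f' x) n q v
      = (\<Sum>(I, I')\<in>covering_pairs {1..n}. iterated_diff I (?g f) * iterated_diff I' (?g f'))"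
    by (simp add: polarization_eq_iterated_diff iterated_diff_mult)
  also have "\<dots> = (\<Sum>(I, I')\<in>covering_pairs {1..n}.
      polarization act f (card I) q (subtuple v I) * polarization act f' (card I') q (subtuple v I'))"
    by (intro sum.cong refl)
      (auto simp: covering_pairs_def polarization_subtuple finite_subset[OF _ finite_atLeastAtMost])
  finally show ?thesis
    by (simp add: covering_pairs_def)
qed

end
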